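(* Let $G$ be a finite simple graph with at least one edge, and let $\lambda_1$ be the smallest non-zero eigenvalue of its Kirchhoff matrix $K$. Then $\lambda_1\geq 1/(\tau(G)-1)$.
   Context: $K=D-A$ is the Kirchhoff matrix (degree matrix minus adjacency matrix) of $G$. The tree-forest ratio is $\tau(G)={\rm det}(1+K)/{\rm Det}(K)=\prod_{\lambda\neq0}(1+1/\lambda)$, the product over the non-zero eigenvalues of $K$ with multiplicity (${\rm Det}$ denotes the pseudo-determinant, the product of the non-zero eigenvalues). *)

theory Defs
  imports "Jordan_Normal_Form.Char_Poly" "HOL-Computational_Algebra.Polynomial"
begin

definition simple_graph :: "nat \<Rightarrow> (nat \<Rightarrow> nat \<Rightarrow> bool) \<Rightarrow> bool" where
  "simple_graph n E \<longleftrightarrow> (\<forall>i<n. \<not> E i i) \<and> (\<forall>i<n. \<forall>j<n. E i j \<longrightarrow> E j i)"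

definition has_edge :: "nat \<Rightarrow> (nat \<Rightarrow> nat \<Rightarrow> bool) \<Rightarrow> bool" where
  "has_edge n E \<longleftrightarrow> (\<exists>i<n. \<exists>j<n. E i j)"

definition vdegree :: "nat \<Rightarrow> (nat \<Rightarrow> nat \<Rightarrow> bool) \<Rightarrow> nat \<Rightarrow> nat" where
  "vdegree n E i = card {j. j < n \<and> E i j}"

definition kirchhoff :: "nat \<Rightarrow> (nat \<Rightarrow> nat \<Rightarrow> bool) \<Rightarrow> real mat" where
  "kirchhoff n E = mat n n (\<lambda>(i,j). (if i = j then real (vdegree n E i) else 0)
                                     - (if E i j then 1 else 0))"

definition eigenvalues_mset :: "real mat \<Rightarrow> real multiset" where
  "eigenvalues_mset A = proots (char_poly A)"

definition pdet :: "real mat \<Rightarrow> real" where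
  "pdet A = prod_mset (filter_mset (\<lambda>x. x \<noteq> 0) (eigenvalues_mset A))"

definition tree_forest_ratio :: "nat \<Rightarrow> (nat \<Rightarrow> nat \<Rightarrow> bool) \<Rightarrow> real" where
  "tree_forest_ratio n E =
     det (1\<^sub>m n + kirchhoff n E) / pdet (kirchhoff n E)"

definition min_nonzero_eigenvalue :: "real mat \<Rightarrow> real" where
  "min_nonzero_eigenvalue A = Min {x. eigenvalue A x \<and> x \<noteq> 0}"

end

theory Submission imports Defs "Jordan_Normal_Form.Schur_Decomposition" begin

(* The Kirchhoff matrix is a graph Laplacian: for every complex vector x,
   2 x* K x = sum over ordered edges (i,j) of |x_i - x_j|^2.  Hence all eigenvalues of K are
   real and non-negative, its characteristic polynomial splits over the reals, and
   det(1 + K) = prod (1 + lambda) over all eigenvalues, so that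
   tau(G) = prod over the non-zero eigenvalues of (1 + 1/lambda).  Every factor exceeds 1,
   whence tau(G) >= 1 + 1/lambda_1.  A non-zero eigenvalue exists because the eigenvalues
   sum to tr K, the sum of the degrees, which is positive as soon as there is an edge. *)

lemma cnj_mult_self: "cnj z * z = of_real ((cmod z)\<^sup>2)"
  by (metis complex_norm_square mult.commute)

lemma one_le_prod_mset:
  fixes f :: "'a \<Rightarrow> 'b :: linordered_semidom"
  shows "(\<And>y. y \<in># M \<Longrightarrow> 1 \<le> f y) \<Longrightarrow> 1 \<le> (\<Prod>y\<in>#M. f y)"
proof (induction M)
  case (add x M)
  have "1 * 1 \<le> f x * (\<Prod>y\<in>#M. f y)"
    by (rule mult_mono') (use add in auto)
  then show ?case by simp
qed simp

lemma prod_mset_ge_member: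
  fixes f :: "'a \<Rightarrow> 'b :: linordered_semidom"
  assumes ge1: "\<And>y. y \<in># M \<Longrightarrow> 1 \<le> f y" and x: "x \<in># M"
  shows "f x \<le> (\<Prod>y\<in>#M. f y)"
proof -
  obtain M' where M: "M = add_mset x M'"
    using multi_member_split[OF x] by blast
  have "f x * 1 \<le> f x * (\<Prod>y\<in>#M'. f y)"
    using ge1 order_trans[OF zero_le_one ge1] unfolding M
    by (intro mult_left_mono one_le_prod_mset) auto
  then show ?thesis
    unfolding M by simp
qed

lemma prod_mset_divide:
  "(\<Prod>x\<in>#M. f x) / (\<Prod>x\<in>#M. g x) = (\<Prod>x\<in>#M. f x / (g x :: 'a :: field))"
  by (induction M) (simp_all flip: times_divide_times_eq)

lemma proots_linear_factors: "proots (\<Prod>b\<leftarrow>bs. [:-b, 1:]) = mset (bs :: 'a :: idom list)"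
proof (induction bs)
  case (Cons b bs)
  have "[:-b, 1:] \<noteq> 0" "(\<Prod>b\<leftarrow>bs. [:-b, 1:]) \<noteq> 0"
    by (auto simp: prod_list_zero_iff)
  then show ?case
    using Cons by (simp add: proots_mult del: mult_pCons_left)
qed simp

lemma map_poly_of_real_linear_factors:
  "map_poly complex_of_real (\<Prod>b\<leftarrow>bs. [:-b, 1:]) = (\<Prod>b\<leftarrow>bs. [:-of_real b, 1:])"
proof -
  interpret map_poly_comm_ring_hom complex_of_real ..
  show ?thesis by (simp add: hom_prod_list comp_def)
qed

lemma char_poly_real_split:
  assumes A: "(A :: real mat) \<in> carrier_mat n n"
    and real: "\<And>a. eigenvalue (map_mat complex_of_real A) a \<Longrightarrow> a \<in> \<real>"
  shows "\<exists>bs. char_poly A = (\<Prod>b\<leftarrow>bs. [:-b, 1:])"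
proof -
  obtain as where factored: "char_poly (map_mat complex_of_real A) = (\<Prod>a\<leftarrow>as. [:-a, 1:])"
    using char_poly_factorized[of "map_mat complex_of_real A" n] A by auto
  have real_as: "a \<in> \<real>" if "a \<in> set as" for a
  proof (rule real)
    have "poly (char_poly (map_mat complex_of_real A)) a = 0"
      unfolding factored using that by (simp add: poly_prod_list prod_list_zero_iff)
    then show "eigenvalue (map_mat complex_of_real A) a"
      using A by (simp add: eigenvalue_root_char_poly)
  qed
  define bs where "bs = map Re as"
  have "as = map complex_of_real bs"
    unfolding bs_def map_map using real_as by (intro map_idI[symmetric]) (auto elim: Reals_cases)
  then have "map_poly complex_of_real (char_poly A) = map_poly complex_of_real (\<Prod>b\<leftarrow>bs. [:-b, 1:])"
    unfolding of_real_hom.char_poly_hom[OF A, symmetric] factored map_poly_of_real_linear_factors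
    by (simp add: comp_def)
  then have "char_poly A = (\<Prod>b\<leftarrow>bs. [:-b, 1:])"
  proof -
    interpret map_poly_inj_comm_ring_hom complex_of_real ..
    show "map_poly complex_of_real (char_poly A) = map_poly complex_of_real (\<Prod>b\<leftarrow>bs. [:-b, 1:])
      \<Longrightarrow> ?thesis" by (simp only: eq_iff)
  qed
  then show ?thesis ..
qed

lemma eigenvalue_iff_mem_eigenvalues_mset:
  assumes "A \<in> carrier_mat n n"
  shows "eigenvalue A x \<longleftrightarrow> x \<in># eigenvalues_mset A"
proof -
  have "char_poly A \<noteq> 0"
    using degree_monic_char_poly[OF assms] by auto
  then show ?thesis
    unfolding eigenvalues_mset_def by (simp add: eigenvalue_root_char_poly[OF assms])
qed

lemma eigenvalues_mset_linear_factors: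
  "char_poly A = (\<Prod>b\<leftarrow>bs. [:-b, 1:]) \<Longrightarrow> eigenvalues_mset A = mset bs"
  by (simp add: eigenvalues_mset_def proots_linear_factors)

lemma det_one_plus_eq_prod_eigenvalues:
  assumes A: "A \<in> carrier_mat n n" and split: "char_poly A = (\<Prod>b\<leftarrow>bs. [:-b, 1:])"
  shows "det (1\<^sub>m n + A) = (\<Prod>b\<in>#eigenvalues_mset A. 1 + b)"
proof -
  have len: "length bs = n"
    using degree_monic_char_poly[OF A] degree_linear_factors[of uminus bs] split by simp
  have "(-1) ^ n * det (1\<^sub>m n + A) = det ((-1) \<cdot>\<^sub>m (1\<^sub>m n + A))"
    using A by simp
  also have "(-1) \<cdot>\<^sub>m (1\<^sub>m n + A) = - char_matrix A (-1)"
    using A by (intro eq_matI) (auto simp: char_matrix_def)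
  also have "det \<dots> = poly (char_poly A) (-1)"
    by (rule char_poly_matrix[OF A, symmetric])
  also have "\<dots> = (\<Prod>b\<leftarrow>bs. - b - 1)"
    unfolding split by (simp add: poly_prod_list comp_def)
  also have "\<dots> = (-1) ^ n * (\<Prod>b\<leftarrow>bs. 1 + b)"
    unfolding len[symmetric] by (induction bs) (auto simp: algebra_simps)
  finally show ?thesis
    by (simp add: eigenvalues_mset_linear_factors[OF split] prod_mset_prod_list flip: mset_map)
qed

lemma det_one_plus_div_pdet:
  assumes A: "A \<in> carrier_mat n n" and split: "char_poly A = (\<Prod>b\<leftarrow>bs. [:-b, 1:])"
  shows "det (1\<^sub>m n + A) / pdet A = (\<Prod>x\<in>#filter_mset (\<lambda>x. x \<noteq> 0) (eigenvalues_mset A). 1 + 1 / x)"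
proof -
  have drop_zeros: "(\<Prod>b\<in>#M. 1 + b) = (\<Prod>b\<in>#filter_mset (\<lambda>x. x \<noteq> 0) M. 1 + b)" for M :: "real multiset"
    by (induction M) auto
  have "det (1\<^sub>m n + A) / pdet A
      = (\<Prod>x\<in>#filter_mset (\<lambda>x. x \<noteq> 0) (eigenvalues_mset A). 1 + x)
      / (\<Prod>x\<in>#filter_mset (\<lambda>x. x \<noteq> 0) (eigenvalues_mset A). x)"
    unfolding det_one_plus_eq_prod_eigenvalues[OF A split] drop_zeros[of "eigenvalues_mset A"] pdet_def
    by simp
  also have "\<dots> = (\<Prod>x\<in>#filter_mset (\<lambda>x. x \<noteq> 0) (eigenvalues_mset A). (1 + x) / x)"
    by (rule prod_mset_divide)
  also have "\<dots> = (\<Prod>x\<in>#filter_mset (\<lambda>x. x \<noteq> 0) (eigenvalues_mset A). 1 + 1 / x)"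
    by (intro arg_cong[where f = prod_mset] image_mset_cong) (simp add: field_simps)
  finally show ?thesis .
qed

definition trace :: "'a :: comm_ring_1 mat \<Rightarrow> 'a" where
  "trace A = (\<Sum>i<dim_row A. A $$ (i, i))"

lemma trace_mult_comm:
  assumes "A \<in> carrier_mat n m" and "B \<in> carrier_mat m n"
  shows "trace (A * B) = trace (B * A)"
proof -
  have "trace (A * B) = (\<Sum>i<n. \<Sum>k<m. A $$ (i, k) * B $$ (k, i))"
    using assms by (auto simp: trace_def scalar_prod_def atLeast0LessThan intro!: sum.cong)
  also have "\<dots> = (\<Sum>k<m. \<Sum>i<n. B $$ (k, i) * A $$ (i, k))"
    by (subst sum.swap) (simp add: mult.commute)
  also have "\<dots> = trace (B * A)"
    using assms by (auto simp: trace_def scalar_prod_def atLeast0LessThan intro!: sum.cong)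
  finally show ?thesis .
qed

lemma trace_similar_mat_wit:
  assumes A: "A \<in> carrier_mat n n" and sim: "similar_mat_wit A B P Q"
  shows "trace A = trace B"
proof -
  from similar_mat_witD2[OF A sim] have B: "B \<in> carrier_mat n n" and P: "P \<in> carrier_mat n n"
    and Q: "Q \<in> carrier_mat n n" and QP: "Q * P = 1\<^sub>m n" and AB: "A = P * B * Q" by auto
  have "trace A = trace (Q * (P * B))"
    unfolding AB by (rule trace_mult_comm) (use P B Q in auto)
  also have "Q * (P * B) = B"
    using P B Q QP by (simp flip: assoc_mult_mat)
  finally show ?thesis .
qed

lemma trace_eq_sum_eigenvalues:
  assumes A: "(A :: real mat) \<in> carrier_mat n n" and split: "char_poly A = (\<Prod>b\<leftarrow>bs. [:-b, 1:])"
  shows "trace A = sum_mset (eigenvalues_mset A)"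
proof -
  obtain B P Q where "schur_decomposition A bs = (B, P, Q)"
    by (metis prod_cases3)
  with schur_decomposition[OF A split] have "similar_mat_wit A B P Q" and "diag_mat B = bs"
    by auto
  then have "trace A = sum_list bs"
    using trace_similar_mat_wit[OF A]
    by (auto simp: trace_def diag_mat_def sum_list_distinct_conv_sum_set atLeast0LessThan)
  then show ?thesis
    by (simp add: eigenvalues_mset_linear_factors[OF split] sum_mset_sum_list)
qed

lemma simple_graph_sym: "simple_graph n E \<Longrightarrow> i < n \<Longrightarrow> j < n \<Longrightarrow> E i j \<Longrightarrow> E j i"
  unfolding simple_graph_def by blast

lemma simple_graph_irrefl: "simple_graph n E \<Longrightarrow> i < n \<Longrightarrow> \<not> E i i"
  unfolding simple_graph_def by blast

lemma kirchhoff_carrier [simp]: "kirchhoff n E \<in> carrier_mat n n"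
  by (simp add: kirchhoff_def)

lemma kirchhoff_mult_vec_index:
  fixes v :: "'a :: {comm_ring_1, real_algebra_1} vec"
  assumes v: "v \<in> carrier_vec n" and i: "i < n"
  shows "(map_mat of_real (kirchhoff n E) *\<^sub>v v) $ i = (\<Sum>j<n. if E i j then v $ i - v $ j else 0)"
proof -
  have "(map_mat of_real (kirchhoff n E) *\<^sub>v v) $ i
      = (\<Sum>j<n. (if i = j then of_nat (vdegree n E i) * v $ i else 0) - (if E i j then v $ j else 0))"
    using v i by (auto simp: scalar_prod_def atLeast0LessThan kirchhoff_def algebra_simps
        intro!: sum.cong)
  also have "\<dots> = of_nat (vdegree n E i) * v $ i - (\<Sum>j<n. if E i j then v $ j else 0)"
    using i by (simp add: sum_subtractf)
  also have "of_nat (vdegree n E i) * v $ i = (\<Sum>j<n. if E i j then v $ i else 0)"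
    by (simp add: sum.If_cases vdegree_def Int_def conj_commute)
  finally show ?thesis
    by (simp add: sum_subtractf[symmetric] if_distrib[of "\<lambda>x. x - _"] cong: if_cong)
qed

lemma kirchhoff_quadratic_form:
  fixes v :: "complex vec"
  assumes sym: "\<And>i j. i < n \<Longrightarrow> j < n \<Longrightarrow> E i j \<Longrightarrow> E j i" and v: "v \<in> carrier_vec n"
  shows "2 * (\<Sum>i<n. cnj (v $ i) * (map_mat of_real (kirchhoff n E) *\<^sub>v v) $ i)
    = of_real (\<Sum>i<n. \<Sum>j<n. if E i j then (cmod (v $ i - v $ j))\<^sup>2 else 0)"
proof -
  define Q where "Q = (\<Sum>i<n. \<Sum>j<n. if E i j then cnj (v $ i) * (v $ i - v $ j) else 0)"
  have form: "(\<Sum>i<n. cnj (v $ i) * (map_mat of_real (kirchhoff n E) *\<^sub>v v) $ i) = Q"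
    unfolding Q_def using v
    by (auto simp: kirchhoff_mult_vec_index sum_distrib_left if_distrib cong: if_cong intro!: sum.cong)
  have "Q = (\<Sum>i<n. \<Sum>j<n. if E i j then cnj (v $ j) * (v $ j - v $ i) else 0)"
    unfolding Q_def by (subst sum.swap) (auto intro!: sum.cong dest: sym)
  then have "2 * Q = Q + (\<Sum>i<n. \<Sum>j<n. if E i j then cnj (v $ j) * (v $ j - v $ i) else 0)"
    by simp
  also have "\<dots> = (\<Sum>i<n. \<Sum>j<n. if E i j then cnj (v $ i - v $ j) * (v $ i - v $ j) else 0)"
    unfolding Q_def by (simp only: sum.distrib[symmetric]) (intro sum.cong refl; simp add: algebra_simps)
  finally show ?thesis
    unfolding form of_real_sum by (simp only: cnj_mult_self of_real_0 if_distrib[of of_real])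
qed

lemma kirchhoff_complex_eigenvalue_nonneg:
  assumes sym: "\<And>i j. i < n \<Longrightarrow> j < n \<Longrightarrow> E i j \<Longrightarrow> E j i"
    and ev: "eigenvalue (map_mat complex_of_real (kirchhoff n E)) a"
  shows "\<exists>b\<ge>0. a = of_real b"
proof -
  let ?K = "map_mat complex_of_real (kirchhoff n E)"
  obtain v where v: "v \<in> carrier_vec n" "v \<noteq> 0\<^sub>v n" "?K *\<^sub>v v = a \<cdot>\<^sub>v v"
    using ev unfolding eigenvalue_def eigenvector_def by (auto simp: kirchhoff_def)
  define R where "R = (\<Sum>i<n. \<Sum>j<n. if E i j then (cmod (v $ i - v $ j))\<^sup>2 else 0)"
  define s where "s = (\<Sum>i<n. (cmod (v $ i))\<^sup>2)"
  obtain i where i: "i < n" "v $ i \<noteq> 0"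
    using v(1,2) by force
  have "0 < (cmod (v $ i))\<^sup>2" using i by simp
  also have "\<dots> \<le> s" unfolding s_def by (rule member_le_sum) (use i in auto)
  finally have "0 < s" .
  have "(\<Sum>i<n. cnj (v $ i) * (?K *\<^sub>v v) $ i) = a * (\<Sum>i<n. cnj (v $ i) * v $ i)"
    using v(1,3) by (simp add: sum_distrib_left algebra_simps)
  also have "\<dots> = a * of_real s"
    by (simp add: s_def cnj_mult_self)
  finally have "2 * (\<Sum>i<n. cnj (v $ i) * (?K *\<^sub>v v) $ i) = 2 * a * of_real s"
    by simp
  then have "a = of_real (R / (2 * s))"
    using kirchhoff_quadratic_form[OF sym v(1)] \<open>0 < s\<close> by (simp add: R_def field_simps)
  moreover have "0 \<le> R" unfolding R_def by (intro sum_nonneg) auto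
  ultimately show ?thesis using \<open>0 < s\<close> by (intro exI[of _ "R / (2 * s)"]) auto
qed

lemma kirchhoff_char_poly_split:
  assumes "simple_graph n E"
  shows "\<exists>bs. char_poly (kirchhoff n E) = (\<Prod>b\<leftarrow>bs. [:-b, 1:])"
proof (rule char_poly_real_split[OF kirchhoff_carrier])
  fix a
  assume "eigenvalue (map_mat complex_of_real (kirchhoff n E)) a"
  then obtain b where "a = of_real b"
    using kirchhoff_complex_eigenvalue_nonneg simple_graph_sym[OF assms] by metis
  then show "a \<in> \<real>" by simp
qed

lemma kirchhoff_eigenvalue_nonneg:
  assumes "simple_graph n E" and "eigenvalue (kirchhoff n E) b"
  shows "0 \<le> b"
proof -
  have "eigenvalue (map_mat complex_of_real (kirchhoff n E)) (of_real b)"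
    by (rule of_real_hom.eigenvalue_hom[OF kirchhoff_carrier assms(2)])
  then show ?thesis
    using kirchhoff_complex_eigenvalue_nonneg[OF simple_graph_sym[OF assms(1)]] by fastforce
qed

lemma kirchhoff_trace:
  assumes "simple_graph n E"
  shows "trace (kirchhoff n E) = (\<Sum>i<n. real (vdegree n E i))"
  using simple_graph_irrefl[OF assms] by (auto simp: trace_def kirchhoff_def intro!: sum.cong)

lemma kirchhoff_has_nonzero_eigenvalue:
  assumes "simple_graph n E" and "has_edge n E"
  shows "\<exists>x. eigenvalue (kirchhoff n E) x \<and> x \<noteq> 0"
proof -
  obtain bs where split: "char_poly (kirchhoff n E) = (\<Prod>b\<leftarrow>bs. [:-b, 1:])"
    using kirchhoff_char_poly_split[OF assms(1)] by blast
  obtain i j where ij: "i < n" "j < n" "E i j"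
    using assms(2) unfolding has_edge_def by blast
  then have "0 < vdegree n E i"
    unfolding vdegree_def by (auto simp: card_gt_0_iff)
  also have "real (vdegree n E i) \<le> trace (kirchhoff n E)"
    unfolding kirchhoff_trace[OF assms(1)] by (rule member_le_sum) (use ij in auto)
  finally have "sum_mset (eigenvalues_mset (kirchhoff n E)) \<noteq> 0"
    unfolding trace_eq_sum_eigenvalues[OF kirchhoff_carrier split] by simp
  then obtain x where "x \<in># eigenvalues_mset (kirchhoff n E)" "x \<noteq> 0"
    by (metis sum_mset.neutral)
  then show ?thesis
    using eigenvalue_iff_mem_eigenvalues_mset[OF kirchhoff_carrier] by blast
qed

theorem mainTheorem4:
  fixes n :: nat and E :: "nat \<Rightarrow> nat \<Rightarrow> bool"
  assumes "simple_graph n E" and "has_edge n E"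
  shows "min_nonzero_eigenvalue (kirchhoff n E) \<ge> 1 / (tree_forest_ratio n E - 1)"
proof -
  let ?K = "kirchhoff n E"
  let ?\<Lambda> = "filter_mset (\<lambda>x. x \<noteq> 0) (eigenvalues_mset ?K)"
  obtain bs where split: "char_poly ?K = (\<Prod>b\<leftarrow>bs. [:-b, 1:])"
    using kirchhoff_char_poly_split[OF assms(1)] by blast
  have nonzero_eigenvalues: "{x. eigenvalue ?K x \<and> x \<noteq> 0} = set_mset ?\<Lambda>"
    using eigenvalue_iff_mem_eigenvalues_mset[OF kirchhoff_carrier] by auto
  have pos: "0 < x" if "x \<in># ?\<Lambda>" for x
    using that kirchhoff_eigenvalue_nonneg[OF assms(1)] nonzero_eigenvalues
    by (metis (mono_tags, lifting) less_eq_real_def mem_Collect_eq)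
  have "set_mset ?\<Lambda> \<noteq> {}"
    using kirchhoff_has_nonzero_eigenvalue[OF assms] nonzero_eigenvalues by blast
  moreover define \<mu> where "\<mu> = min_nonzero_eigenvalue ?K"
  ultimately have \<mu>: "\<mu> \<in># ?\<Lambda>"
    unfolding \<mu>_def min_nonzero_eigenvalue_def nonzero_eigenvalues by (intro Min_in) simp_all
  have "1 + 1 / \<mu> \<le> tree_forest_ratio n E"
    unfolding tree_forest_ratio_def det_one_plus_div_pdet[OF kirchhoff_carrier split]
    by (rule prod_mset_ge_member[OF _ \<mu>]) (simp add: pos less_imp_le)
  then have "inverse (tree_forest_ratio n E - 1) \<le> inverse (1 / \<mu>)"
    using pos[OF \<mu>] by (intro le_imp_inverse_le) auto
  then show ?thesis
    by (simp add: \<mu>_def divide_inverse)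
qed

end
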